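(* Let $(X,d)$ be a complete separable metric space and $(\xi_k)_{k=1}^n$ a stochastic process with state space $X$, initial law $P^{(1)}$ and conditional laws $p_k(\cdot\mid x^{(k-1)})$. Suppose there exist $\kappa_1>0$, $M>0$ and $0\le\rho_j\le M$ ($j=1,\dots,n$) such that: (i) $P^{(1)}$ and $p_k(\cdot\mid x^{(k-1)})$ ($k=2,\dots,n$, $x^{(k-1)}\in X^{k-1}$) satisfy $GC(\kappa_1)$ on $(X,d)$; (ii) for $k=2,\dots,n$ and all $x^{(k-1)},y^{(k-1)}$: $W_1\bigl(p_k(\cdot\mid x^{(k-1)}),p_k(\cdot\mid y^{(k-1)})\bigr)\le\sum_{j=1}^{k-1}\rho_{k-j}\,d(x_j,y_j)$. Then $P^{(n)}$ satisfies $GC(\kappa_n)$ on $(X^n,d^{(1)})$ with $\kappa_n=\kappa_1(1+M)^{2n}/M^2$. If moreover (iii) $\sum_{j=1}^n\rho_j\le R$, then $P^{(n)}$ satisfies $GC(\kappa_n(R))$ on $(X^n,d^{(1)})$ with $$\kappa_n(R)=\kappa_1\sum_{m=1}^n\Bigl(\sum_{k=0}^{m-1}R^k\Bigr)^2.$$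
   Context: $GC(\kappa)$ for $\mu$ on a metric space $(Y,\delta)$: $\int e^{tF}d\mu\le\exp(t\int Fd\mu+\kappa t^2/2)$ for all $t\in\mathbb R$ and all $1$-Lipschitz $F:(Y,\delta)\to\mathbb R$. $W_1(\mu,\nu)=\inf_\pi\iint d(x,y)\pi(dx\,dy)$ over couplings. $d^{(1)}(x^{(n)},y^{(n)})=\sum_{j=1}^nd(x_j,y_j)$. Joint law $P^{(n)}(dx^{(n)})=p_n(dx_n\mid x^{(n-1)})\cdots p_2(dx_2\mid x_1)P^{(1)}(dx_1)$. *)

theory Defs
  imports "HOL-Probability.Probability"
begin

definition GC :: "real \<Rightarrow> 'b measure \<Rightarrow> ('b \<Rightarrow> 'b \<Rightarrow> real) \<Rightarrow> bool" where
  "GC \<kappa> \<mu> \<delta> \<longleftrightarrow>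
     (\<forall>F. F \<in> borel_measurable \<mu> \<and> (\<forall>x\<in>space \<mu>. \<forall>y\<in>space \<mu>. \<bar>F x - F y\<bar> \<le> \<delta> x y) \<longrightarrow>
        integrable \<mu> F \<and>
        (\<forall>t::real. (\<integral>\<^sup>+ x. ennreal (exp (t * F x)) \<partial>\<mu>)
                     \<le> ennreal (exp (t * (\<integral>x. F x \<partial>\<mu>) + \<kappa> * t\<^sup>2 / 2))))"

definition couplings :: "'a::metric_space measure \<Rightarrow> 'a measure \<Rightarrow> ('a \<times> 'a) measure set" where
  "couplings \<mu> \<nu> = {\<pi>. sets \<pi> = sets borel \<and> prob_space \<pi> \<and>
                        distr \<pi> borel fst = \<mu> \<and> distr \<pi> borel snd = \<nu>}"

definition W1 :: "'a::metric_space measure \<Rightarrow> 'a measure \<Rightarrow> ennreal" where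
  "W1 \<mu> \<nu> = (INF \<pi> \<in> couplings \<mu> \<nu>. \<integral>\<^sup>+ z. ennreal (dist (fst z) (snd z)) \<partial>\<pi>)"

text \<open>Points of X^k are functions on the index set {1..k} (extensional);
  the product space carries the product sigma-algebra.\<close>
abbreviation Xpow :: "nat \<Rightarrow> (nat \<Rightarrow> 'a::topological_space) measure" where
  "Xpow k \<equiv> PiM {1..k} (\<lambda>_. borel)"

definition d1 :: "nat \<Rightarrow> (nat \<Rightarrow> 'a::metric_space) \<Rightarrow> (nat \<Rightarrow> 'a) \<Rightarrow> real" where
  "d1 n x y = (\<Sum>j=1..n. dist (x j) (y j))"

text \<open>Joint law P^(n)(dx^(n)) = p_n(dx_n | x^(n-1)) ... p_2(dx_2 | x_1) P^(1)(dx_1).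
  p k x is the conditional law of the k-th coordinate given x = x^(k-1).\<close>
fun joint :: "'a::topological_space measure \<Rightarrow> (nat \<Rightarrow> (nat \<Rightarrow> 'a) \<Rightarrow> 'a measure) \<Rightarrow> nat
                \<Rightarrow> (nat \<Rightarrow> 'a) measure" where
  "joint P1 p 0 = Xpow 0"
| "joint P1 p (Suc 0) = distr P1 (Xpow (Suc 0)) (\<lambda>a. \<lambda>i\<in>{1..Suc 0}. a)"
| "joint P1 p (Suc (Suc k)) =
     joint P1 p (Suc k) \<bind>
       (\<lambda>x. distr (p (Suc (Suc k)) x) (Xpow (Suc (Suc k))) (\<lambda>a. x(Suc (Suc k) := a)))"

end

theory Submission
  imports Defs
begin

(* Integrate out the coordinates one at a time, starting with the last one.  If F is
   Lipschitz for the weighted distance sum_j a_j d(x_j, y_j), then given x^(m-1) the section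
   z |-> F(x^(m-1), z) is a_m-Lipschitz, so GC(kappa_1) of p_m bounds its conditional
   exponential moments by exp(kappa_1 a_m^2 t^2 / 2).  The conditional mean of F is again
   weighted-Lipschitz: coupling p_m(. | x^(m-1)) with p_m(. | y^(m-1)) and using (ii) moves the
   weight a_m rho_(m-j) onto coordinate j.  By the tower property the variance proxies add up,
   so P^(n) is sub-Gaussian with variance proxy kappa_1 * chain_variance rho n a for every F
   that is Lipschitz with weights a.  Starting from unit weights, each step multiplies the
   weights by at most 1 + M, and under (iii) the weight of the k-th coordinate from the end
   stays below sum_(i<k) R^i. *)

section \<open>Sub-Gaussian functions\<close>

definition subgaussian :: "'b measure \<Rightarrow> ('b \<Rightarrow> real) \<Rightarrow> real \<Rightarrow> bool" where
  "subgaussian \<mu> F v \<longleftrightarrow> integrable \<mu> F \<and>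
     (\<forall>t. (\<integral>\<^sup>+x. ennreal (exp (t * F x)) \<partial>\<mu>) \<le> ennreal (exp (t * (\<integral>x. F x \<partial>\<mu>) + v * t\<^sup>2 / 2)))"

lemma GC_iff_subgaussian:
  "GC \<kappa> \<mu> \<delta> \<longleftrightarrow> (\<forall>F. F \<in> borel_measurable \<mu> \<longrightarrow>
     (\<forall>x\<in>space \<mu>. \<forall>y\<in>space \<mu>. \<bar>F x - F y\<bar> \<le> \<delta> x y) \<longrightarrow> subgaussian \<mu> F \<kappa>)"
  by (auto simp: GC_def subgaussian_def)

lemma subgaussian_mono:
  assumes "subgaussian \<mu> F v" and "v \<le> w"
  shows "subgaussian \<mu> F w"
proof -
  have "exp (t * (\<integral>x. F x \<partial>\<mu>) + v * t\<^sup>2 / 2) \<le> exp (t * (\<integral>x. F x \<partial>\<mu>) + w * t\<^sup>2 / 2)" for t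
    using assms(2) by (simp add: mult_right_mono)
  then show ?thesis
    using assms(1) unfolding subgaussian_def by (meson ennreal_leI order_trans)
qed

lemma subgaussian_const:
  assumes "prob_space \<mu>" and "\<And>x. x \<in> space \<mu> \<Longrightarrow> F x = c"
  shows "subgaussian \<mu> F 0"
proof -
  interpret prob_space \<mu> by fact
  have "integrable \<mu> F \<longleftrightarrow> integrable \<mu> (\<lambda>_. c)"
    by (rule Bochner_Integration.integrable_cong) (simp_all add: assms(2))
  moreover have "(\<integral>x. F x \<partial>\<mu>) = c"
    using Bochner_Integration.integral_cong[of \<mu> \<mu> F "\<lambda>_. c"] assms(2) by (simp add: prob_space)
  moreover have "(\<integral>\<^sup>+x. ennreal (exp (t * F x)) \<partial>\<mu>) = ennreal (exp (t * c))" for t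
    using nn_integral_cong[of \<mu> "\<lambda>x. ennreal (exp (t * F x))" "\<lambda>_. ennreal (exp (t * c))"] assms(2)
    by (simp add: emeasure_space_1)
  ultimately show ?thesis
    unfolding subgaussian_def by simp
qed

lemma subgaussian_cmult:
  assumes "subgaussian \<mu> F v"
  shows "subgaussian \<mu> (\<lambda>x. c * F x) (c\<^sup>2 * v)"
  unfolding subgaussian_def
proof (intro conjI allI)
  show "integrable \<mu> (\<lambda>x. c * F x)"
    using assms unfolding subgaussian_def by simp
  fix t
  have "(\<integral>\<^sup>+x. ennreal (exp (t * (c * F x))) \<partial>\<mu>) = (\<integral>\<^sup>+x. ennreal (exp ((t * c) * F x)) \<partial>\<mu>)"
    by (simp add: mult.assoc)
  also have "\<dots> \<le> ennreal (exp ((t * c) * (\<integral>x. F x \<partial>\<mu>) + v * (t * c)\<^sup>2 / 2))"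
    using assms unfolding subgaussian_def by blast
  also have "(t * c) * (\<integral>x. F x \<partial>\<mu>) + v * (t * c)\<^sup>2 / 2 = t * (\<integral>x. c * F x \<partial>\<mu>) + c\<^sup>2 * v * t\<^sup>2 / 2"
    by (simp only: integral_mult_right_zero power_mult_distrib mult_ac)
  finally show "(\<integral>\<^sup>+x. ennreal (exp (t * (c * F x))) \<partial>\<mu>) \<le> ennreal (exp (t * (\<integral>x. c * F x \<partial>\<mu>) + c\<^sup>2 * v * t\<^sup>2 / 2))" .
qed

lemma subgaussian_lipschitz_if_GC:
  fixes \<mu> :: "'a::metric_space measure"
  assumes GC: "GC \<kappa> \<mu> dist" and "prob_space \<mu>" and f: "f \<in> borel_measurable \<mu>" and "0 \<le> L"
    and lip: "\<And>x y. x \<in> space \<mu> \<Longrightarrow> y \<in> space \<mu> \<Longrightarrow> \<bar>f x - f y\<bar> \<le> L * dist x y"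
  shows "subgaussian \<mu> f (L\<^sup>2 * \<kappa>)"
proof (cases "L = 0")
  case True
  obtain x0 where "x0 \<in> space \<mu>"
    using prob_space.not_empty[OF \<open>prob_space \<mu>\<close>] by blast
  have "f x = f x0" if "x \<in> space \<mu>" for x
    using lip[OF that \<open>x0 \<in> space \<mu>\<close>] True by simp
  then have "subgaussian \<mu> f 0"
    using \<open>prob_space \<mu>\<close> by (rule subgaussian_const[rotated])
  with True show ?thesis
    by simp
next
  case False
  then have "0 < L" using \<open>0 \<le> L\<close> by simp
  have "\<bar>f x / L - f y / L\<bar> \<le> dist x y" if "x \<in> space \<mu>" "y \<in> space \<mu>" for x y
  proof -
    have "\<bar>f x / L - f y / L\<bar> = \<bar>f x - f y\<bar> / L"
      using \<open>0 < L\<close> by (simp add: diff_divide_distrib[symmetric] abs_divide)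
    also have "\<dots> \<le> dist x y"
      unfolding pos_divide_le_eq[OF \<open>0 < L\<close>] using lip[OF that] by (metis mult.commute)
    finally show ?thesis .
  qed
  with GC f have "subgaussian \<mu> (\<lambda>x. f x / L) \<kappa>"
    unfolding GC_iff_subgaussian by simp
  from subgaussian_cmult[OF this, of L] show ?thesis
    using \<open>0 < L\<close> by simp
qed

lemma subgaussian_distr:
  assumes T: "T \<in> N \<rightarrow>\<^sub>M M" and F: "F \<in> borel_measurable M"
  shows "subgaussian (distr N M T) F v \<longleftrightarrow> subgaussian N (\<lambda>x. F (T x)) v"
  using F by (simp add: subgaussian_def integrable_distr_eq[OF T F] integral_distr[OF T F]
      nn_integral_distr[OF T])

lemma integrable_if_exp_moments:
  fixes F :: "'b \<Rightarrow> real"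
  assumes F: "F \<in> borel_measurable \<mu>"
    and "(\<integral>\<^sup>+x. ennreal (exp (F x)) \<partial>\<mu>) < \<infinity>" and "(\<integral>\<^sup>+x. ennreal (exp (- F x)) \<partial>\<mu>) < \<infinity>"
  shows "integrable \<mu> F"
proof (rule integrableI_bounded)
  show "F \<in> borel_measurable \<mu>" by fact
  have "norm (F x) \<le> exp (F x) + exp (- F x)" for x
    using exp_ge_add_one_self[of "F x"] exp_ge_add_one_self[of "- F x"] exp_gt_zero[of "F x"]
      exp_gt_zero[of "- F x"] unfolding real_norm_def abs_le_iff by linarith
  then have "(\<integral>\<^sup>+x. ennreal (norm (F x)) \<partial>\<mu>) \<le> (\<integral>\<^sup>+x. ennreal (exp (F x)) + ennreal (exp (- F x)) \<partial>\<mu>)"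
    by (intro nn_integral_mono) (metis ennreal_leI ennreal_plus exp_ge_zero)
  also have "\<dots> = (\<integral>\<^sup>+x. ennreal (exp (F x)) \<partial>\<mu>) + (\<integral>\<^sup>+x. ennreal (exp (- F x)) \<partial>\<mu>)"
    using F by (intro nn_integral_add) auto
  also have "\<dots> < \<infinity>"
    using assms(2,3) by (simp add: ennreal_add_less_top)
  finally show "(\<integral>\<^sup>+x. ennreal (norm (F x)) \<partial>\<mu>) < \<infinity>" .
qed

lemma integral_bind_nonneg:
  fixes h :: "'b \<Rightarrow> real"
  assumes K: "K \<in> M \<rightarrow>\<^sub>M subprob_algebra B" and M: "space M \<noteq> {}" and h: "h \<in> borel_measurable B"
    and h_nonneg: "\<And>y. 0 \<le> h y" and "integrable (M \<bind> K) h"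
  shows "integrable M (\<lambda>x. \<integral>y. h y \<partial>K x)"
    and "(\<integral>y. h y \<partial>(M \<bind> K)) = (\<integral>x. \<integral>y. h y \<partial>K x \<partial>M)"
proof -
  have K_integral: "(\<integral>y. h y \<partial>K x) = enn2real (\<integral>\<^sup>+y. h y \<partial>K x)" if "x \<in> space M" for x
    using h h_nonneg subprob_measurableD(2)[OF K that]
    by (intro integral_eq_nn_integral) (simp_all cong: measurable_cong_sets)
  have nn_bind: "(\<integral>\<^sup>+y. h y \<partial>(M \<bind> K)) = (\<integral>\<^sup>+x. \<integral>\<^sup>+y. h y \<partial>K x \<partial>M)"
    using h K by (intro nn_integral_bind) auto
  have "(\<integral>\<^sup>+y. h y \<partial>(M \<bind> K)) < \<infinity>"
    using \<open>integrable (M \<bind> K) h\<close> h_nonneg by (simp add: integrable_iff_bounded)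
  moreover have "(\<lambda>x. \<integral>\<^sup>+y. h y \<partial>K x) \<in> borel_measurable M"
    using K h by (intro measurable_compose[OF K nn_integral_measurable_subprob_algebra]) auto
  ultimately have "AE x in M. (\<integral>\<^sup>+y. h y \<partial>K x) \<noteq> \<infinity>"
    unfolding nn_bind by (intro nn_integral_PInf_AE) auto
  then have nn_eq: "(\<integral>\<^sup>+x. ennreal (\<integral>y. h y \<partial>K x) \<partial>M) = (\<integral>\<^sup>+y. h y \<partial>(M \<bind> K))"
    unfolding nn_bind by (intro nn_integral_cong_AE) (auto simp: K_integral ennreal_enn2real_if)
  have meas: "(\<lambda>x. \<integral>y. h y \<partial>K x) \<in> borel_measurable M"
    using K h by measurable
  show "integrable M (\<lambda>x. \<integral>y. h y \<partial>K x)"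
    using meas nn_eq \<open>(\<integral>\<^sup>+y. h y \<partial>(M \<bind> K)) < \<infinity>\<close>
    by (intro integrableI_nonneg) (auto intro!: AE_I2 Bochner_Integration.integral_nonneg h_nonneg)
  have "(\<integral>y. h y \<partial>(M \<bind> K)) = enn2real (\<integral>\<^sup>+y. h y \<partial>(M \<bind> K))"
    using h h_nonneg measurable_cong_sets[OF sets_bind_measurable[OF K M] refl]
    by (intro integral_eq_nn_integral) auto
  also have "\<dots> = (\<integral>x. \<integral>y. h y \<partial>K x \<partial>M)"
    using meas unfolding nn_eq[symmetric]
    by (intro integral_eq_nn_integral[symmetric]) (auto intro!: AE_I2 Bochner_Integration.integral_nonneg h_nonneg)
  finally show "(\<integral>y. h y \<partial>(M \<bind> K)) = (\<integral>x. \<integral>y. h y \<partial>K x \<partial>M)" .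
qed

(* Unlike integral_bind of the Giry monad, this does not require f to be bounded. *)
lemma integral_bind_kernel:
  fixes f :: "'b \<Rightarrow> real"
  assumes K: "K \<in> M \<rightarrow>\<^sub>M subprob_algebra B" and M: "space M \<noteq> {}" and f: "f \<in> borel_measurable B"
    and "integrable (M \<bind> K) f" and f_int_K: "\<And>x. x \<in> space M \<Longrightarrow> integrable (K x) f"
  shows "(\<integral>y. f y \<partial>(M \<bind> K)) = (\<integral>x. \<integral>y. f y \<partial>K x \<partial>M)"
proof -
  define f_pos where "f_pos y = max (f y) 0" for y
  define f_neg where "f_neg y = max (- f y) 0" for y
  have f_split: "f y = f_pos y - f_neg y" for y
    unfolding f_pos_def f_neg_def by simp
  have meas: "f_pos \<in> borel_measurable B" "f_neg \<in> borel_measurable B"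
    unfolding f_pos_def f_neg_def using f by measurable
  have nonneg: "0 \<le> f_pos y" "0 \<le> f_neg y" for y
    unfolding f_pos_def f_neg_def by simp_all
  have int_pos: "integrable N f_pos" and int_neg: "integrable N f_neg" if "integrable N f" for N
    unfolding f_pos_def f_neg_def using that by auto
  note pos = integral_bind_nonneg[OF K M meas(1) nonneg(1) int_pos[OF \<open>integrable (M \<bind> K) f\<close>]]
  note neg = integral_bind_nonneg[OF K M meas(2) nonneg(2) int_neg[OF \<open>integrable (M \<bind> K) f\<close>]]
  have "(\<integral>y. f y \<partial>(M \<bind> K)) = (\<integral>y. f_pos y \<partial>(M \<bind> K)) - (\<integral>y. f_neg y \<partial>(M \<bind> K))"
    unfolding f_split using int_pos int_neg \<open>integrable (M \<bind> K) f\<close> by simp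
  also have "\<dots> = (\<integral>x. \<integral>y. f_pos y \<partial>K x \<partial>M) - (\<integral>x. \<integral>y. f_neg y \<partial>K x \<partial>M)"
    using pos(2) neg(2) by simp
  also have "\<dots> = (\<integral>x. (\<integral>y. f_pos y \<partial>K x) - (\<integral>y. f_neg y \<partial>K x) \<partial>M)"
    using pos(1) neg(1) by simp
  also have "\<dots> = (\<integral>x. \<integral>y. f y \<partial>K x \<partial>M)"
  proof (intro Bochner_Integration.integral_cong refl)
    fix x assume "x \<in> space M"
    then have "integrable (K x) f" by (rule f_int_K)
    with int_pos int_neg show "(\<integral>y. f_pos y \<partial>K x) - (\<integral>y. f_neg y \<partial>K x) = (\<integral>y. f y \<partial>K x)"
      by (simp add: f_split)
  qed
  finally show ?thesis .
qed

lemma subgaussian_bind: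
  fixes F :: "'b \<Rightarrow> real"
  assumes J: "J \<in> space (prob_algebra A)" and K: "K \<in> A \<rightarrow>\<^sub>M prob_algebra B"
    and F: "F \<in> borel_measurable B"
    and cond: "\<And>x. x \<in> space A \<Longrightarrow> subgaussian (K x) F v"
    and mean: "subgaussian J (\<lambda>x. \<integral>y. F y \<partial>K x) w"
  shows "subgaussian (J \<bind> K) F (v + w)"
proof -
  define G where "G x = (\<integral>y. F y \<partial>K x)" for x
  have sets_J: "sets J = sets A" and "prob_space J"
    using J by (simp_all add: space_prob_algebra)
  then have J_nonempty: "space J \<noteq> {}"
    by (simp add: prob_space.not_empty)
  have space_J: "space J = space A"
    using sets_J by (rule sets_eq_imp_space_eq)
  have K_sub: "K \<in> J \<rightarrow>\<^sub>M subprob_algebra B"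
    using measurable_prob_algebraD[OF K] by (simp add: measurable_cong_sets[OF sets_J refl])
  have F_bind: "F \<in> borel_measurable (J \<bind> K)"
    using F sets_bind'[OF J K] by (simp cong: measurable_cong_sets)
  have G_meas: "G \<in> borel_measurable J"
    unfolding G_def by (rule measurable_compose[OF K_sub integral_measurable_subprob_algebra[OF F]])
  have mgf: "(\<integral>\<^sup>+y. ennreal (exp (t * F y)) \<partial>(J \<bind> K))
      \<le> ennreal (exp (t * (\<integral>x. G x \<partial>J) + (v + w) * t\<^sup>2 / 2))" for t
  proof -
    have "(\<integral>\<^sup>+y. ennreal (exp (t * F y)) \<partial>(J \<bind> K)) = (\<integral>\<^sup>+x. \<integral>\<^sup>+y. ennreal (exp (t * F y)) \<partial>K x \<partial>J)"
      by (rule nn_integral_bind[OF _ K_sub]) (use F in measurable)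
    also have "\<dots> \<le> (\<integral>\<^sup>+x. ennreal (exp (v * t\<^sup>2 / 2)) * ennreal (exp (t * G x)) \<partial>J)"
    proof (rule nn_integral_mono)
      fix x assume "x \<in> space J"
      then have "(\<integral>\<^sup>+y. ennreal (exp (t * F y)) \<partial>K x) \<le> ennreal (exp (t * G x + v * t\<^sup>2 / 2))"
        using cond unfolding space_J subgaussian_def G_def by blast
      also have "\<dots> = ennreal (exp (v * t\<^sup>2 / 2)) * ennreal (exp (t * G x))"
        unfolding add.commute[of "t * G x"] exp_add by (rule ennreal_mult) simp_all
      finally show "(\<integral>\<^sup>+y. ennreal (exp (t * F y)) \<partial>K x) \<le> ennreal (exp (v * t\<^sup>2 / 2)) * ennreal (exp (t * G x))" .
    qed
    also have "\<dots> = ennreal (exp (v * t\<^sup>2 / 2)) * (\<integral>\<^sup>+x. ennreal (exp (t * G x)) \<partial>J)"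
      by (rule nn_integral_cmult) (use G_meas in measurable)
    also have "\<dots> \<le> ennreal (exp (v * t\<^sup>2 / 2)) * ennreal (exp (t * (\<integral>x. G x \<partial>J) + w * t\<^sup>2 / 2))"
      using mean unfolding subgaussian_def G_def by (intro mult_left_mono) auto
    also have "\<dots> = ennreal (exp (v * t\<^sup>2 / 2 + (t * (\<integral>x. G x \<partial>J) + w * t\<^sup>2 / 2)))"
      unfolding exp_add by (rule ennreal_mult[symmetric]) simp_all
    also have "v * t\<^sup>2 / 2 + (t * (\<integral>x. G x \<partial>J) + w * t\<^sup>2 / 2) = t * (\<integral>x. G x \<partial>J) + (v + w) * t\<^sup>2 / 2"
      by (simp add: add_divide_distrib distrib_right)
    finally show ?thesis .
  qed
  have "integrable (J \<bind> K) F"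
  proof (rule integrable_if_exp_moments[OF F_bind])
    show "(\<integral>\<^sup>+y. ennreal (exp (F y)) \<partial>(J \<bind> K)) < \<infinity>"
      using le_less_trans[OF mgf[of 1]] by simp
    show "(\<integral>\<^sup>+y. ennreal (exp (- F y)) \<partial>(J \<bind> K)) < \<infinity>"
      using le_less_trans[OF mgf[of "-1"]] by simp
  qed
  moreover have "(\<integral>y. F y \<partial>(J \<bind> K)) = (\<integral>x. G x \<partial>J)"
    unfolding G_def using \<open>integrable (J \<bind> K) F\<close> cond
    by (intro integral_bind_kernel[OF K_sub J_nonempty F]) (auto simp: space_J subgaussian_def)
  ultimately show ?thesis
    using mgf unfolding subgaussian_def by simp
qed

section \<open>Kantorovich distance and Lipschitz functions\<close>

lemma abs_integral_diff_le_coupling: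
  fixes f g :: "'a::{metric_space, second_countable_topology} \<Rightarrow> real"
  assumes \<pi>: "\<pi> \<in> couplings \<mu> \<nu>"
    and f: "f \<in> borel_measurable borel" and g: "g \<in> borel_measurable borel"
    and "integrable \<mu> f" and "integrable \<nu> g" and "0 \<le> c"
    and bound: "\<And>z1 z2. \<bar>f z1 - g z2\<bar> \<le> D + c * dist z1 z2"
    and dist_int: "integrable \<pi> (\<lambda>z. dist (fst z) (snd z))"
  shows "\<bar>(\<integral>z. f z \<partial>\<mu>) - (\<integral>z. g z \<partial>\<nu>)\<bar> \<le> D + c * (\<integral>z. dist (fst z) (snd z) \<partial>\<pi>)"
proof -
  have sets_\<pi>: "sets \<pi> = sets borel" and "prob_space \<pi>"
    and \<mu>: "distr \<pi> borel fst = \<mu>" and \<nu>: "distr \<pi> borel snd = \<nu>"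
    using \<pi> unfolding couplings_def by auto
  have fst: "fst \<in> \<pi> \<rightarrow>\<^sub>M (borel :: 'a measure)"
    using measurable_cong_sets[OF sets_\<pi> refl]
      borel_measurable_continuous_onI[OF continuous_on_fst[OF continuous_on_id]] by blast
  have snd: "snd \<in> \<pi> \<rightarrow>\<^sub>M (borel :: 'a measure)"
    using measurable_cong_sets[OF sets_\<pi> refl]
      borel_measurable_continuous_onI[OF continuous_on_snd[OF continuous_on_id]] by blast
  have int_f: "(\<integral>z. f z \<partial>\<mu>) = (\<integral>z. f (fst z) \<partial>\<pi>)"
    using integral_distr[OF fst f] \<mu> by simp
  have int_g: "(\<integral>z. g z \<partial>\<nu>) = (\<integral>z. g (snd z) \<partial>\<pi>)"
    using integral_distr[OF snd g] \<nu> by simp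
  have f_\<pi>: "integrable \<pi> (\<lambda>z. f (fst z))"
    using integrable_distr_eq[OF fst f] \<mu> \<open>integrable \<mu> f\<close> by simp
  have g_\<pi>: "integrable \<pi> (\<lambda>z. g (snd z))"
    using integrable_distr_eq[OF snd g] \<nu> \<open>integrable \<nu> g\<close> by simp
  have const_int: "integrable \<pi> (\<lambda>_. D)"
    using \<open>prob_space \<pi>\<close> by (simp add: prob_space_def finite_measure.integrable_const)
  have "integrable \<pi> (\<lambda>z. D + c * dist (fst z) (snd z))"
    using const_int dist_int by simp
  with f_\<pi> g_\<pi> bound
  have "(\<integral>z. \<bar>f (fst z) - g (snd z)\<bar> \<partial>\<pi>) \<le> (\<integral>z. D + c * dist (fst z) (snd z) \<partial>\<pi>)"
    by (intro Bochner_Integration.integral_mono) simp_all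
  have "\<bar>(\<integral>z. f z \<partial>\<mu>) - (\<integral>z. g z \<partial>\<nu>)\<bar> = \<bar>\<integral>z. f (fst z) - g (snd z) \<partial>\<pi>\<bar>"
    unfolding int_f int_g using f_\<pi> g_\<pi> by simp
  also have "\<dots> \<le> (\<integral>z. \<bar>f (fst z) - g (snd z)\<bar> \<partial>\<pi>)"
    by (rule integral_abs_bound)
  also have "\<dots> \<le> (\<integral>z. D + c * dist (fst z) (snd z) \<partial>\<pi>)"
    by fact
  also have "\<dots> = (\<integral>z. D \<partial>\<pi>) + c * (\<integral>z. dist (fst z) (snd z) \<partial>\<pi>)"
    using const_int dist_int by simp
  also have "\<dots> = D + c * (\<integral>z. dist (fst z) (snd z) \<partial>\<pi>)"
    using prob_space.prob_space[OF \<open>prob_space \<pi>\<close>] by simp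
  finally show ?thesis .
qed

lemma abs_integral_diff_le_W1:
  fixes f g :: "'a::{metric_space, second_countable_topology} \<Rightarrow> real"
  assumes f: "f \<in> borel_measurable borel" and g: "g \<in> borel_measurable borel"
    and "integrable \<mu> f" and "integrable \<nu> g" and "0 \<le> c" and "0 \<le> W"
    and bound: "\<And>z1 z2. \<bar>f z1 - g z2\<bar> \<le> D + c * dist z1 z2"
    and W1: "W1 \<mu> \<nu> \<le> ennreal W"
  shows "\<bar>(\<integral>z. f z \<partial>\<mu>) - (\<integral>z. g z \<partial>\<nu>)\<bar> \<le> D + c * W"
proof -
  \<comment> \<open>The infimum defining W1 need not be attained, so use couplings of cost below any w > W.\<close>
  have near_W: "\<bar>(\<integral>z. f z \<partial>\<mu>) - (\<integral>z. g z \<partial>\<nu>)\<bar> \<le> D + c * w" if "W < w" for w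
  proof -
    have "ennreal W < ennreal w"
      using that \<open>0 \<le> W\<close> by (simp add: ennreal_less_iff)
    with W1 have "W1 \<mu> \<nu> < ennreal w"
      by (rule order.strict_trans1)
    then obtain \<pi> where \<pi>: "\<pi> \<in> couplings \<mu> \<nu>"
      and less_w: "(\<integral>\<^sup>+z. ennreal (dist (fst z) (snd z)) \<partial>\<pi>) < ennreal w"
      unfolding W1_def by (auto simp: INF_less_iff)
    have "sets \<pi> = sets borel"
      using \<pi> unfolding couplings_def by simp
    moreover have "continuous_on UNIV (\<lambda>z::'a \<times> 'a. dist (fst z) (snd z))"
      by (intro continuous_intros)
    ultimately have "(\<lambda>z. dist (fst z) (snd z)) \<in> borel_measurable \<pi>"
      using measurable_cong_sets borel_measurable_continuous_onI by blast
    then have dist_int: "integrable \<pi> (\<lambda>z. dist (fst z) (snd z))"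
      using less_w by (intro integrableI_nonneg) (auto simp: less_top[symmetric] intro: order.strict_trans)
    have "ennreal (\<integral>z. dist (fst z) (snd z) \<partial>\<pi>) < ennreal w"
      using nn_integral_eq_integral[OF dist_int] less_w by simp
    then have "(\<integral>z. dist (fst z) (snd z) \<partial>\<pi>) < w"
      by (subst (asm) ennreal_less_iff) (auto intro: integral_nonneg_AE)
    then have "D + c * (\<integral>z. dist (fst z) (snd z) \<partial>\<pi>) \<le> D + c * w"
      using \<open>0 \<le> c\<close> by (simp add: mult_left_mono)
    with abs_integral_diff_le_coupling[OF \<pi> f g assms(3-5) bound dist_int] show ?thesis
      by linarith
  qed
  show ?thesis
  proof (rule field_le_epsilon)
    fix e :: real assume "0 < e"
    then have "\<bar>(\<integral>z. f z \<partial>\<mu>) - (\<integral>z. g z \<partial>\<nu>)\<bar> \<le> D + c * (W + e / (c + 1))"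
      using \<open>0 \<le> c\<close> by (intro near_W) simp
    also have "c * (e / (c + 1)) \<le> e"
      using \<open>0 < e\<close> \<open>0 \<le> c\<close> by (simp add: field_simps)
    then have "D + c * (W + e / (c + 1)) \<le> D + c * W + e"
      by (simp add: distrib_left)
    finally show "\<bar>(\<integral>z. f z \<partial>\<mu>) - (\<integral>z. g z \<partial>\<nu>)\<bar> \<le> D + c * W + e" .
  qed
qed

section \<open>Extending a path by one coordinate\<close>

definition weighted_lipschitz :: "nat \<Rightarrow> (nat \<Rightarrow> real) \<Rightarrow> ((nat \<Rightarrow> 'a::metric_space) \<Rightarrow> real) \<Rightarrow> bool" where
  "weighted_lipschitz m a F \<longleftrightarrow>
     (\<forall>x\<in>space (Xpow m). \<forall>y\<in>space (Xpow m). \<bar>F x - F y\<bar> \<le> (\<Sum>j=1..m. a j * dist (x j) (y j)))"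

definition extend_kernel ::
    "(nat \<Rightarrow> (nat \<Rightarrow> 'a::topological_space) \<Rightarrow> 'a measure) \<Rightarrow> nat \<Rightarrow> (nat \<Rightarrow> 'a) \<Rightarrow> (nat \<Rightarrow> 'a) measure" where
  "extend_kernel p m x = distr (p (Suc m) x) (Xpow (Suc m)) (\<lambda>z. x(Suc m := z))"

lemma joint_Suc: "1 \<le> m \<Longrightarrow> joint P1 p (Suc m) = joint P1 p m \<bind> extend_kernel p m"
  by (cases m) (simp_all add: extend_kernel_def[abs_def])

lemma measurable_fun_upd_Xpow: "(\<lambda>(x, z). x(Suc m := z)) \<in> Xpow m \<Otimes>\<^sub>M borel \<rightarrow>\<^sub>M Xpow (Suc m)"
proof -
  have "{1..Suc m} = insert (Suc m) {1..m}" by auto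
  then show ?thesis
    using measurable_add_dim[of "Suc m" "{1..m}" "\<lambda>_. borel"] by simp
qed

lemma fun_upd_measurable_Xpow:
  assumes "x \<in> space (Xpow m)"
  shows "(\<lambda>z. x(Suc m := z)) \<in> borel \<rightarrow>\<^sub>M Xpow (Suc m)"
proof -
  have "{1..Suc m} = insert (Suc m) {1..m}" by auto
  then show ?thesis
    using measurable_component_update[OF assms, of "Suc m"] by simp
qed

lemma extend_kernel_measurable:
  assumes "p (Suc m) \<in> Xpow m \<rightarrow>\<^sub>M prob_algebra borel"
  shows "extend_kernel p m \<in> Xpow m \<rightarrow>\<^sub>M prob_algebra (Xpow (Suc m))"
  unfolding extend_kernel_def[abs_def]
  by (rule measurable_distr_prob_space2[OF assms measurable_fun_upd_Xpow])

lemma sum_dist_fun_upd: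
  fixes x y :: "nat \<Rightarrow> 'a::metric_space"
  shows "(\<Sum>j=1..Suc m. a j * dist ((x(Suc m := z1)) j) ((y(Suc m := z2)) j))
       = (\<Sum>j=1..m. a j * dist (x j) (y j)) + a (Suc m) * dist z1 z2"
proof -
  have "(\<Sum>j=1..m. a j * dist ((x(Suc m := z1)) j) ((y(Suc m := z2)) j)) = (\<Sum>j=1..m. a j * dist (x j) (y j))"
    by (rule sum.cong) auto
  then show ?thesis by simp
qed

lemma weighted_lipschitz_fun_upd:
  assumes "weighted_lipschitz (Suc m) a F" and "x \<in> space (Xpow m)" and "y \<in> space (Xpow m)"
  shows "\<bar>F (x(Suc m := z1)) - F (y(Suc m := z2))\<bar> \<le> (\<Sum>j=1..m. a j * dist (x j) (y j)) + a (Suc m) * dist z1 z2"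
proof -
  have "x(Suc m := z1) \<in> space (Xpow (Suc m))" "y(Suc m := z2) \<in> space (Xpow (Suc m))"
    using measurable_space[OF fun_upd_measurable_Xpow[OF assms(2)], of z1]
      measurable_space[OF fun_upd_measurable_Xpow[OF assms(3)], of z2] by simp_all
  with assms(1) show ?thesis
    unfolding weighted_lipschitz_def sum_dist_fun_upd[symmetric] by blast
qed

section \<open>The variance proxy\<close>

fun chain_variance :: "(nat \<Rightarrow> real) \<Rightarrow> nat \<Rightarrow> (nat \<Rightarrow> real) \<Rightarrow> real" where
  "chain_variance \<rho> 0 a = 0"
| "chain_variance \<rho> (Suc m) a = (a (Suc m))\<^sup>2 + chain_variance \<rho> m (\<lambda>j. a j + a (Suc m) * \<rho> (Suc m - j))"

lemma chain_variance_le_geometric: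
  fixes M c :: real
  assumes \<rho>: "\<forall>j\<in>{1..m}. 0 \<le> \<rho> j \<and> \<rho> j \<le> M" and "0 \<le> M" and "0 \<le> c"
    and a: "\<forall>j\<in>{1..m}. 0 \<le> a j \<and> a j \<le> c"
  shows "chain_variance \<rho> m a \<le> c\<^sup>2 * (\<Sum>i<m. ((1 + M)\<^sup>2) ^ i)"
  using \<rho> \<open>0 \<le> c\<close> a
proof (induction m arbitrary: a c)
  case 0
  then show ?case by simp
next
  case (Suc m)
  define a' where "a' j = a j + a (Suc m) * \<rho> (Suc m - j)" for j
  have last: "0 \<le> a (Suc m)" "a (Suc m) \<le> c"
    using Suc.prems(3) by auto
  have "0 \<le> a' j \<and> a' j \<le> c * (1 + M)" if "j \<in> {1..m}" for j
  proof -
    have "0 \<le> \<rho> (Suc m - j)" "\<rho> (Suc m - j) \<le> M" "0 \<le> a j" "a j \<le> c"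
      using Suc.prems(1,3) that by auto
    moreover from this have "a (Suc m) * \<rho> (Suc m - j) \<le> c * M"
      using last by (intro mult_mono) auto
    ultimately show ?thesis
      unfolding a'_def using last by (simp add: distrib_left)
  qed
  with Suc.IH[of "c * (1 + M)" a'] Suc.prems \<open>0 \<le> M\<close>
  have "chain_variance \<rho> m a' \<le> (c * (1 + M))\<^sup>2 * (\<Sum>i<m. ((1 + M)\<^sup>2) ^ i)"
    by simp
  moreover have "(a (Suc m))\<^sup>2 \<le> c\<^sup>2"
    using last by (simp add: power_mono)
  moreover have "chain_variance \<rho> (Suc m) a = (a (Suc m))\<^sup>2 + chain_variance \<rho> m a'"
    by (simp add: a'_def[abs_def])
  ultimately have "chain_variance \<rho> (Suc m) a \<le> c\<^sup>2 + c\<^sup>2 * ((1 + M)\<^sup>2 * (\<Sum>i<m. ((1 + M)\<^sup>2) ^ i))"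
    by (simp add: power_mult_distrib mult.assoc)
  also have "\<dots> = c\<^sup>2 * (1 + (1 + M)\<^sup>2 * (\<Sum>i<m. ((1 + M)\<^sup>2) ^ i))"
    by (simp add: distrib_left)
  also have "\<dots> = c\<^sup>2 * (\<Sum>i<Suc m. ((1 + M)\<^sup>2) ^ i)"
    by (simp only: sum.lessThan_Suc_shift power_Suc sum_distrib_left[symmetric]) simp
  finally show ?case .
qed

lemma chain_variance_le_uniform:
  fixes M :: real
  assumes \<rho>: "\<forall>j\<in>{1..n}. 0 \<le> \<rho> j \<and> \<rho> j \<le> M" and "0 < M"
  shows "chain_variance \<rho> n (\<lambda>_. 1) \<le> (1 + M) ^ (2 * n) / M\<^sup>2"
proof -
  have "chain_variance \<rho> n (\<lambda>_. 1) \<le> (\<Sum>i<n. ((1 + M)\<^sup>2) ^ i)"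
    using chain_variance_le_geometric[OF \<rho>, of 1] \<open>0 < M\<close> by simp
  also have "\<dots> \<le> (((1 + M)\<^sup>2) ^ n - 1) / M\<^sup>2"
  proof -
    have "M\<^sup>2 \<le> (1 + M)\<^sup>2 - 1"
      using \<open>0 < M\<close> by (simp add: power2_eq_square algebra_simps)
    then have "M\<^sup>2 * (\<Sum>i<n. ((1 + M)\<^sup>2) ^ i) \<le> ((1 + M)\<^sup>2 - 1) * (\<Sum>i<n. ((1 + M)\<^sup>2) ^ i)"
      by (intro mult_right_mono sum_nonneg) auto
    then show ?thesis
      using \<open>0 < M\<close> by (simp add: power_diff_1_eq pos_le_divide_eq mult.commute)
  qed
  also have "\<dots> \<le> (1 + M) ^ (2 * n) / M\<^sup>2"
    by (simp add: power_mult divide_right_mono)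
  finally show ?thesis .
qed

lemma geometric_sum_Suc: "(\<Sum>i=0..Suc k. R ^ i) = 1 + R * (\<Sum>i=0..k. R ^ i :: 'a::comm_semiring_1)"
  by (simp only: sum.atLeast0_atMost_Suc_shift) (simp add: sum_distrib_left)

lemma last_weight_le_geometric_sum:
  fixes R :: real
  assumes \<rho>: "\<forall>j\<in>{1..N}. 0 \<le> \<rho> j" and R: "(\<Sum>j=1..N. \<rho> j) \<le> R" and "0 \<le> R" and "Suc m \<le> N"
    and b: "b \<le> 1 + (\<Sum>i=0..N - Suc (Suc m). R ^ i) * (\<Sum>l=1..N - Suc m. \<rho> l)"
  shows "b \<le> (\<Sum>i=0..N - Suc m. R ^ i)"
proof (cases "N = Suc m")
  case True
  with b show ?thesis by simp
next
  case False
  then have N_eq: "N - Suc m = Suc (N - Suc (Suc m))"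
    using \<open>Suc m \<le> N\<close> by simp
  have "(\<Sum>l=1..N - Suc m. \<rho> l) \<le> (\<Sum>l=1..N. \<rho> l)"
    using \<rho> by (intro sum_mono2) auto
  then have "(\<Sum>i=0..N - Suc (Suc m). R ^ i) * (\<Sum>l=1..N - Suc m. \<rho> l) \<le> (\<Sum>i=0..N - Suc (Suc m). R ^ i) * R"
    using R \<open>0 \<le> R\<close> by (intro mult_left_mono sum_nonneg) auto
  with b show ?thesis
    unfolding N_eq geometric_sum_Suc by (simp add: mult.commute)
qed

(* The hypothesis on a bounds the weights that remain after the coordinates N, ..., m + 1 have
   been integrated out, starting from unit weights. *)
lemma chain_variance_le_geometric_sums:
  fixes R :: real
  assumes \<rho>: "\<forall>j\<in>{1..N}. 0 \<le> \<rho> j" and R: "(\<Sum>j=1..N. \<rho> j) \<le> R" and "m \<le> N"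
    and a: "\<forall>j\<in>{1..m}. 0 \<le> a j \<and> a j \<le> 1 + (\<Sum>i=0..N - Suc m. R ^ i) * (\<Sum>l=Suc m - j..N - j. \<rho> l)"
  shows "chain_variance \<rho> m a \<le> (\<Sum>k=1..m. (\<Sum>i=0..N - k. R ^ i)\<^sup>2)"
  using \<open>m \<le> N\<close> a
proof (induction m arbitrary: a)
  case 0
  then show ?case by simp
next
  case (Suc m)
  define c where "c k = (\<Sum>i=0..N - k. R ^ i)" for k
  define a' where "a' j = a j + a (Suc m) * \<rho> (Suc m - j)" for j
  have "0 \<le> R"
    using R \<rho> sum_nonneg[of "{1..N}" \<rho>] by simp
  have "0 \<le> a (Suc m)"
    and "a (Suc m) \<le> 1 + (\<Sum>i=0..N - Suc (Suc m). R ^ i) * (\<Sum>l=1..N - Suc m. \<rho> l)"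
    using Suc.prems(2)[rule_format, of "Suc m"] by simp_all
  then have last: "0 \<le> a (Suc m)" "a (Suc m) \<le> c (Suc m)"
    unfolding c_def using last_weight_le_geometric_sum[OF \<rho> R \<open>0 \<le> R\<close> Suc.prems(1)] by simp_all
  have c_mono: "c (Suc (Suc m)) \<le> c (Suc m)"
    unfolding c_def using \<open>0 \<le> R\<close> by (intro sum_mono2) auto
  have "0 \<le> a' j \<and> a' j \<le> 1 + c (Suc m) * (\<Sum>l=Suc m - j..N - j. \<rho> l)" if j: "j \<in> {1..m}" for j
  proof -
    have "Suc m - j \<in> {1..N}"
      using j Suc.prems(1) by auto
    then have \<rho>_j: "0 \<le> \<rho> (Suc m - j)"
      using \<rho> by blast
    have tail: "0 \<le> (\<Sum>l=Suc (Suc m) - j..N - j. \<rho> l)"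
    proof (intro sum_nonneg)
      fix l assume "l \<in> {Suc (Suc m) - j..N - j}"
      then have "l \<in> {1..N}" using j by auto
      then show "0 \<le> \<rho> l" using \<rho> by blast
    qed
    have split: "(\<Sum>l=Suc m - j..N - j. \<rho> l) = \<rho> (Suc m - j) + (\<Sum>l=Suc (Suc m) - j..N - j. \<rho> l)"
    proof -
      have "Suc (Suc m) - j = Suc (Suc m - j)" and "Suc m - j \<le> N - j"
        using j Suc.prems(1) by auto
      then show ?thesis by (simp add: sum.atLeast_Suc_atMost)
    qed
    have "0 \<le> a j" "a j \<le> 1 + c (Suc (Suc m)) * (\<Sum>l=Suc (Suc m) - j..N - j. \<rho> l)"
      using Suc.prems(2) j unfolding c_def by auto
    moreover have "c (Suc (Suc m)) * (\<Sum>l=Suc (Suc m) - j..N - j. \<rho> l) \<le> c (Suc m) * (\<Sum>l=Suc (Suc m) - j..N - j. \<rho> l)"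
      using c_mono tail by (rule mult_right_mono)
    moreover have "a (Suc m) * \<rho> (Suc m - j) \<le> c (Suc m) * \<rho> (Suc m - j)"
      using last(2) \<rho>_j by (rule mult_right_mono)
    ultimately show ?thesis
      unfolding a'_def split using last(1) \<rho>_j by (simp add: distrib_left)
  qed
  then have "chain_variance \<rho> m a' \<le> (\<Sum>k=1..m. (c k)\<^sup>2)"
    using Suc.IH Suc.prems(1) unfolding c_def by simp
  moreover have "(a (Suc m))\<^sup>2 \<le> (c (Suc m))\<^sup>2"
    using last by (simp add: power_mono)
  ultimately show ?case
    unfolding c_def by (simp add: a'_def[abs_def])
qed

section \<open>Propagation along the process\<close>

locale GC_process =
  fixes P1 :: "'a::polish_space measure" and p :: "nat \<Rightarrow> (nat \<Rightarrow> 'a) \<Rightarrow> 'a measure"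
    and n :: nat and \<kappa>1 :: real and \<rho> :: "nat \<Rightarrow> real"
  assumes \<rho>_nonneg: "\<And>j. j \<in> {1..n} \<Longrightarrow> 0 \<le> \<rho> j"
    and P1: "P1 \<in> space (prob_algebra borel)"
    and p_kernel: "\<And>k. k \<in> {2..n} \<Longrightarrow> p k \<in> Xpow (k - 1) \<rightarrow>\<^sub>M prob_algebra borel"
    and GC_P1: "GC \<kappa>1 P1 dist"
    and GC_p: "\<And>k x. k \<in> {2..n} \<Longrightarrow> x \<in> space (Xpow (k - 1)) \<Longrightarrow> GC \<kappa>1 (p k x) dist"
    and W1_p: "\<And>k x y. k \<in> {2..n} \<Longrightarrow> x \<in> space (Xpow (k - 1)) \<Longrightarrow> y \<in> space (Xpow (k - 1)) \<Longrightarrow>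
                 W1 (p k x) (p k y) \<le> ennreal (\<Sum>j=1..k-1. \<rho> (k - j) * dist (x j) (y j))"
begin

lemma \<rho>_nonneg_reflected: "j \<in> {1..m} \<Longrightarrow> m < n \<Longrightarrow> 0 \<le> \<rho> (Suc m - j)"
  by (rule \<rho>_nonneg) auto

lemma p_measurable: "1 \<le> m \<Longrightarrow> m < n \<Longrightarrow> p (Suc m) \<in> Xpow m \<rightarrow>\<^sub>M prob_algebra borel"
  using p_kernel[of "Suc m"] by simp

lemma p_in_prob_algebra:
  "1 \<le> m \<Longrightarrow> m < n \<Longrightarrow> x \<in> space (Xpow m) \<Longrightarrow> p (Suc m) x \<in> space (prob_algebra borel)"
  using measurable_space[OF p_measurable] by blast

lemma extend_kernel_in_prob_algebra:
  "1 \<le> m \<Longrightarrow> m < n \<Longrightarrow> extend_kernel p m \<in> Xpow m \<rightarrow>\<^sub>M prob_algebra (Xpow (Suc m))"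
  by (intro extend_kernel_measurable p_measurable)

lemma joint_in_prob_algebra: "1 \<le> m \<Longrightarrow> m \<le> n \<Longrightarrow> joint P1 p m \<in> space (prob_algebra (Xpow m))"
proof (induction m rule: nat_induct_at_least)
  case base
  have sets_P1: "sets P1 = sets borel" and "prob_space P1"
    using P1 by (simp_all add: space_prob_algebra)
  have "(\<lambda>a. \<lambda>i\<in>{1..Suc 0}. a) \<in> P1 \<rightarrow>\<^sub>M Xpow (Suc 0)"
    unfolding measurable_cong_sets[OF sets_P1 refl] by (rule measurable_restrict) simp
  from prob_space.prob_space_distr[OF \<open>prob_space P1\<close> this] show ?case
    by (simp add: space_prob_algebra)
next
  case (Suc m)
  then have "joint P1 p m \<in> space (prob_algebra (Xpow m))"
    and "extend_kernel p m \<in> Xpow m \<rightarrow>\<^sub>M prob_algebra (Xpow (Suc m))"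
    using extend_kernel_in_prob_algebra by simp_all
  with \<open>1 \<le> m\<close> show ?case
    by (simp add: joint_Suc space_prob_algebra prob_space_bind' sets_bind')
qed

lemma sets_p: "1 \<le> m \<Longrightarrow> m < n \<Longrightarrow> x \<in> space (Xpow m) \<Longrightarrow> sets (p (Suc m) x) = sets borel"
  using p_in_prob_algebra by (simp add: space_prob_algebra)

lemma prob_space_p: "1 \<le> m \<Longrightarrow> m < n \<Longrightarrow> x \<in> space (Xpow m) \<Longrightarrow> prob_space (p (Suc m) x)"
  using p_in_prob_algebra by (simp add: space_prob_algebra)

lemma fun_upd_measurable_p:
  assumes "1 \<le> m" "m < n" "x \<in> space (Xpow m)"
  shows "(\<lambda>z. x(Suc m := z)) \<in> p (Suc m) x \<rightarrow>\<^sub>M Xpow (Suc m)"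
  unfolding measurable_cong_sets[OF sets_p[OF assms] refl] by (rule fun_upd_measurable_Xpow[OF assms(3)])

lemma integral_extend_kernel:
  fixes F :: "(nat \<Rightarrow> 'a) \<Rightarrow> real"
  assumes "1 \<le> m" "m < n" "x \<in> space (Xpow m)" and F: "F \<in> borel_measurable (Xpow (Suc m))"
  shows "(\<integral>y. F y \<partial>extend_kernel p m x) = (\<integral>z. F (x(Suc m := z)) \<partial>p (Suc m) x)"
  unfolding extend_kernel_def by (rule integral_distr[OF fun_upd_measurable_p[OF assms(1-3)] F])

lemma subgaussian_section:
  assumes "1 \<le> m" "m < n" "x \<in> space (Xpow m)" "0 \<le> a (Suc m)"
    and F: "F \<in> borel_measurable (Xpow (Suc m))" and lip: "weighted_lipschitz (Suc m) a F"
  shows "subgaussian (p (Suc m) x) (\<lambda>z. F (x(Suc m := z))) ((a (Suc m))\<^sup>2 * \<kappa>1)"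
proof (rule subgaussian_lipschitz_if_GC)
  show "GC \<kappa>1 (p (Suc m) x) dist"
    using GC_p[of "Suc m" x] assms(1-3) by simp
  show "prob_space (p (Suc m) x)"
    using prob_space_p[OF assms(1-3)] .
  show "(\<lambda>z. F (x(Suc m := z))) \<in> borel_measurable (p (Suc m) x)"
    using measurable_compose[OF fun_upd_measurable_p[OF assms(1-3)] F] .
  show "\<bar>F (x(Suc m := z1)) - F (x(Suc m := z2))\<bar> \<le> a (Suc m) * dist z1 z2" for z1 z2
    using weighted_lipschitz_fun_upd[OF lip assms(3,3), of z1 z2] by simp
  show "0 \<le> a (Suc m)" by fact
qed

lemma subgaussian_extend_kernel:
  assumes "1 \<le> m" "m < n" "x \<in> space (Xpow m)" "0 \<le> a (Suc m)"
    and F: "F \<in> borel_measurable (Xpow (Suc m))" and "weighted_lipschitz (Suc m) a F"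
  shows "subgaussian (extend_kernel p m x) F ((a (Suc m))\<^sup>2 * \<kappa>1)"
  using subgaussian_section[OF assms] unfolding extend_kernel_def
  by (subst subgaussian_distr[OF fun_upd_measurable_p[OF assms(1-3)] F])

lemma conditional_mean_lipschitz:
  assumes "1 \<le> m" "m < n" "0 \<le> a (Suc m)"
    and F: "F \<in> borel_measurable (Xpow (Suc m))" and lip: "weighted_lipschitz (Suc m) a F"
  shows "weighted_lipschitz m (\<lambda>j. a j + a (Suc m) * \<rho> (Suc m - j)) (\<lambda>x. \<integral>y. F y \<partial>extend_kernel p m x)"
  unfolding weighted_lipschitz_def
proof (intro ballI)
  fix x y :: "nat \<Rightarrow> 'a"
  assume x: "x \<in> space (Xpow m)" and y: "y \<in> space (Xpow m)"
  define W where "W = (\<Sum>j=1..m. \<rho> (Suc m - j) * dist (x j) (y j))"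
  have "0 \<le> W"
    unfolding W_def using \<rho>_nonneg_reflected \<open>m < n\<close> by (intro sum_nonneg mult_nonneg_nonneg) auto
  have "W1 (p (Suc m) x) (p (Suc m) y) \<le> ennreal W"
    using W1_p[of "Suc m" x y] x y assms(1,2) unfolding W_def by simp
  have section_integrable: "integrable (p (Suc m) z) (\<lambda>w. F (z(Suc m := w)))"
    and section_measurable: "(\<lambda>w. F (z(Suc m := w))) \<in> borel_measurable borel"
    if "z \<in> space (Xpow m)" for z
    using subgaussian_section[OF assms(1,2) that assms(3) F lip]
      measurable_compose[OF fun_upd_measurable_Xpow[OF that] F]
    unfolding subgaussian_def by simp_all
  have "\<bar>(\<integral>w. F (x(Suc m := w)) \<partial>p (Suc m) x) - (\<integral>w. F (y(Suc m := w)) \<partial>p (Suc m) y)\<bar>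
      \<le> (\<Sum>j=1..m. a j * dist (x j) (y j)) + a (Suc m) * W"
    using weighted_lipschitz_fun_upd[OF lip x y] section_integrable[OF x] section_measurable[OF x]
      section_integrable[OF y] section_measurable[OF y]
      \<open>0 \<le> a (Suc m)\<close> \<open>0 \<le> W\<close> \<open>W1 (p (Suc m) x) (p (Suc m) y) \<le> ennreal W\<close>
    by (intro abs_integral_diff_le_W1) simp_all
  also have "\<dots> = (\<Sum>j=1..m. (a j + a (Suc m) * \<rho> (Suc m - j)) * dist (x j) (y j))"
    unfolding W_def by (simp add: sum_distrib_left sum.distrib algebra_simps)
  finally show "\<bar>(\<integral>z. F z \<partial>extend_kernel p m x) - (\<integral>z. F z \<partial>extend_kernel p m y)\<bar>
      \<le> (\<Sum>j=1..m. (a j + a (Suc m) * \<rho> (Suc m - j)) * dist (x j) (y j))"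
    unfolding integral_extend_kernel[OF assms(1,2) x F] integral_extend_kernel[OF assms(1,2) y F] .
qed

lemma subgaussian_joint_1:
  assumes "0 \<le> a 1" and F: "F \<in> borel_measurable (Xpow 1)" and lip: "weighted_lipschitz 1 a F"
  shows "subgaussian (joint P1 p 1) F (\<kappa>1 * chain_variance \<rho> 1 a)"
proof -
  define emb :: "'a \<Rightarrow> nat \<Rightarrow> 'a" where "emb = (\<lambda>z. \<lambda>i\<in>{1..1}. z)"
  have sets_P1: "sets P1 = sets borel" and "prob_space P1"
    using P1 by (simp_all add: space_prob_algebra)
  have emb_borel: "emb \<in> borel \<rightarrow>\<^sub>M Xpow 1"
    unfolding emb_def by (rule measurable_restrict) simp
  then have emb: "emb \<in> P1 \<rightarrow>\<^sub>M Xpow 1"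
    unfolding measurable_cong_sets[OF sets_P1 refl] .
  have "\<bar>F (emb z1) - F (emb z2)\<bar> \<le> a 1 * dist z1 z2" for z1 z2
  proof -
    have "\<bar>F (emb z1) - F (emb z2)\<bar> \<le> (\<Sum>j=1..1. a j * dist (emb z1 j) (emb z2 j))"
      using lip measurable_space[OF emb_borel, of z1] measurable_space[OF emb_borel, of z2]
      unfolding weighted_lipschitz_def by simp
    then show ?thesis by (simp add: emb_def)
  qed
  then have "subgaussian P1 (\<lambda>z. F (emb z)) ((a 1)\<^sup>2 * \<kappa>1)"
    using measurable_compose[OF emb F] \<open>prob_space P1\<close> \<open>0 \<le> a 1\<close>
    by (intro subgaussian_lipschitz_if_GC[OF GC_P1]) simp_all
  then have "subgaussian (distr P1 (Xpow 1) emb) F ((a 1)\<^sup>2 * \<kappa>1)"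
    unfolding subgaussian_distr[OF emb F] .
  moreover have "joint P1 p 1 = distr P1 (Xpow 1) emb"
    by (simp add: emb_def)
  moreover have "\<kappa>1 * chain_variance \<rho> 1 a = (a 1)\<^sup>2 * \<kappa>1"
    by simp
  ultimately show ?thesis
    by (simp only:)
qed

lemma subgaussian_joint:
  assumes "1 \<le> m" "m \<le> n" "\<forall>j\<in>{1..m}. 0 \<le> a j"
    and "F \<in> borel_measurable (Xpow m)" and "weighted_lipschitz m a F"
  shows "subgaussian (joint P1 p m) F (\<kappa>1 * chain_variance \<rho> m a)"
  using assms
proof (induction m arbitrary: a F rule: nat_induct_at_least)
  case base
  then show ?case
    by (intro subgaussian_joint_1) simp_all
next
  case (Suc m)
  define a' where "a' j = a j + a (Suc m) * \<rho> (Suc m - j)" for j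
  define G where "G x = (\<integral>y. F y \<partial>extend_kernel p m x)" for x
  have "m < n" "0 \<le> a (Suc m)"
    using Suc.prems by simp_all
  have "\<forall>j\<in>{1..m}. 0 \<le> a' j"
    unfolding a'_def using Suc.prems(2) \<open>m < n\<close> \<rho>_nonneg_reflected by (simp add: add_nonneg_nonneg)
  moreover have "G \<in> borel_measurable (Xpow m)"
    unfolding G_def
    using measurable_prob_algebraD[OF extend_kernel_in_prob_algebra[OF \<open>1 \<le> m\<close> \<open>m < n\<close>]] Suc.prems(3)
    by (rule measurable_compose[OF _ integral_measurable_subprob_algebra])
  moreover have "weighted_lipschitz m a' G"
    unfolding a'_def[abs_def] G_def[abs_def]
    using conditional_mean_lipschitz \<open>1 \<le> m\<close> \<open>m < n\<close> \<open>0 \<le> a (Suc m)\<close> Suc.prems(3,4) by blast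
  ultimately have "subgaussian (joint P1 p m) G (\<kappa>1 * chain_variance \<rho> m a')"
    using Suc.IH \<open>m < n\<close> by simp
  then have "subgaussian (joint P1 p m \<bind> extend_kernel p m) F ((a (Suc m))\<^sup>2 * \<kappa>1 + \<kappa>1 * chain_variance \<rho> m a')"
    unfolding G_def
    using joint_in_prob_algebra[OF \<open>1 \<le> m\<close>] extend_kernel_in_prob_algebra[OF \<open>1 \<le> m\<close>]
      subgaussian_extend_kernel[OF \<open>1 \<le> m\<close> \<open>m < n\<close> _ \<open>0 \<le> a (Suc m)\<close> Suc.prems(3,4)] \<open>m < n\<close>
    by (intro subgaussian_bind[OF _ _ Suc.prems(3)]) simp_all
  then show ?case
    by (simp add: joint_Suc[OF \<open>1 \<le> m\<close>] a'_def[abs_def] algebra_simps)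
qed

lemma GC_joint:
  assumes "1 \<le> n" and "\<kappa>1 * chain_variance \<rho> n (\<lambda>_. 1) \<le> \<kappa>"
  shows "GC \<kappa> (joint P1 p n) (d1 n)"
  unfolding GC_iff_subgaussian
proof (intro allI impI)
  fix F assume F: "F \<in> borel_measurable (joint P1 p n)"
    and lip: "\<forall>x\<in>space (joint P1 p n). \<forall>y\<in>space (joint P1 p n). \<bar>F x - F y\<bar> \<le> d1 n x y"
  have sets_joint: "sets (joint P1 p n) = sets (Xpow n)"
    using joint_in_prob_algebra[OF \<open>1 \<le> n\<close> order.refl] by (simp add: space_prob_algebra)
  have "F \<in> borel_measurable (Xpow n)"
    using F unfolding measurable_cong_sets[OF sets_joint refl] .
  moreover have "weighted_lipschitz n (\<lambda>_. 1) F"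
    using lip sets_eq_imp_space_eq[OF sets_joint] unfolding weighted_lipschitz_def d1_def by simp
  ultimately have "subgaussian (joint P1 p n) F (\<kappa>1 * chain_variance \<rho> n (\<lambda>_. 1))"
    using \<open>1 \<le> n\<close> by (intro subgaussian_joint) simp_all
  then show "subgaussian (joint P1 p n) F \<kappa>"
    using assms(2) by (rule subgaussian_mono)
qed

end

theorem theorem3p1:
  fixes P1 :: "'a::polish_space measure"
    and p :: "nat \<Rightarrow> (nat \<Rightarrow> 'a) \<Rightarrow> 'a measure"
    and n :: nat and \<kappa>1 M :: real and \<rho> :: "nat \<Rightarrow> real"
  assumes n: "n \<ge> 1"
    and \<kappa>1: "\<kappa>1 > 0" and M: "M > 0"
    and \<rho>: "\<And>j. j \<in> {1..n} \<Longrightarrow> 0 \<le> \<rho> j \<and> \<rho> j \<le> M"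
    and P1: "P1 \<in> space (prob_algebra borel)"
    and p_kernel: "\<And>k. k \<in> {2..n} \<Longrightarrow> p k \<in> Xpow (k - 1) \<rightarrow>\<^sub>M prob_algebra borel"
    and GC_P1: "GC \<kappa>1 P1 dist"
    and GC_p: "\<And>k x. k \<in> {2..n} \<Longrightarrow> x \<in> space (Xpow (k - 1)) \<Longrightarrow> GC \<kappa>1 (p k x) dist"
    and W1_p: "\<And>k x y. k \<in> {2..n} \<Longrightarrow> x \<in> space (Xpow (k - 1)) \<Longrightarrow> y \<in> space (Xpow (k - 1)) \<Longrightarrow>
                 W1 (p k x) (p k y) \<le> ennreal (\<Sum>j=1..k-1. \<rho> (k - j) * dist (x j) (y j))"
  shows "GC (\<kappa>1 * (1 + M) ^ (2 * n) / M\<^sup>2) (joint P1 p n) (d1 n) \<and>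
         (\<forall>R::real. (\<Sum>j=1..n. \<rho> j) \<le> R \<longrightarrow>
           GC (\<kappa>1 * (\<Sum>m=1..n. (\<Sum>k=0..m-1. R ^ k)\<^sup>2)) (joint P1 p n) (d1 n))"
proof -
  interpret GC_process P1 p n \<kappa>1 \<rho>
    using \<rho> P1 p_kernel GC_P1 GC_p W1_p by unfold_locales auto
  have "\<kappa>1 * chain_variance \<rho> n (\<lambda>_. 1) \<le> \<kappa>1 * ((1 + M) ^ (2 * n) / M\<^sup>2)"
    using \<rho> M \<kappa>1 by (intro mult_left_mono chain_variance_le_uniform) auto
  then have "GC (\<kappa>1 * (1 + M) ^ (2 * n) / M\<^sup>2) (joint P1 p n) (d1 n)"
    using n by (intro GC_joint) simp_all
  moreover have "GC (\<kappa>1 * (\<Sum>m=1..n. (\<Sum>k=0..m-1. R ^ k)\<^sup>2)) (joint P1 p n) (d1 n)"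
    if R: "(\<Sum>j=1..n. \<rho> j) \<le> R" for R
  proof -
    have "chain_variance \<rho> n (\<lambda>_. 1) \<le> (\<Sum>k=1..n. (\<Sum>i=0..n - k. R ^ i)\<^sup>2)"
      using \<rho> R by (intro chain_variance_le_geometric_sums) auto
    also have "\<dots> = (\<Sum>m=1..n. (\<Sum>k=0..m-1. R ^ k)\<^sup>2)"
      by (subst sum.atLeastAtMost_rev) (intro sum.cong, auto)
    finally show ?thesis
      using n \<kappa>1 by (intro GC_joint) (simp_all add: mult_left_mono)
  qed
  ultimately show ?thesis by blast
qed

end
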